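(* Let $G=(\mathcal{S},\mathcal{A})$ be a directed acyclic graph (the state graph of a GFlowNet), equipped with a forward policy $P_F(\cdot\mid s)$, a probability distribution on $\mathrm{Child}(s)$ for every state $s$ with nonempty child set, and a backward policy $P_B(\cdot\mid s')$, a probability distribution on the parents of $s'$. Let $\tau=(s_0\to s_1\to\dots\to s_n)$ be a trajectory in $G$ (so $s_{t+1}\in\mathrm{Child}(s_t)$) such that every $s_t$, $0\le t\le n$, has a nonempty child set. Then $$\mathcal{L}_{\mathrm{OT}}(\tau)\le \mathcal{L}_{\mathrm{UB}}(\tau):=\sum_{t=0}^{n-1}\Big[\mathbf{H}\big(P_F(\cdot\mid s_t),P_B^{*}(\cdot\mid s_t)\big)-\log P_F(s_{t+1}\mid s_t)+\mathbf{H}\big(P_F(\cdot\mid s_{t+1})\big)\Big],$$ where all quantities take values in $[0,+\infty]$ (with $-\log 0=+\infty$).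
   Context: For neighbor states $s\to s'$ with $\mathrm{Child}(s)=\{u_1,\dots,u_k\}$ and $\mathrm{Child}(s')=\{v_1,\dots,v_l\}$, define the cost matrix $\mathbf{C}\in[0,\infty]^{k\times l}$ by: $\mathbf{C}_{ij}=0$ if $u_i=v_j$; $\mathbf{C}_{ij}=\min\big(-\log(P_B(s\mid u_i)P_F(s'\mid s)P_F(v_j\mid s')),\,-\log P_F(v_j\mid u_i)\big)$ if $u_i\ne v_j$ and $u_i\to v_j$ is an edge of $G$; and $\mathbf{C}_{ij}=-\log(P_B(s\mid u_i)P_F(s'\mid s)P_F(v_j\mid s'))$ otherwise. The optimal transport distance is $\mathrm{OT}_{\mathbf{C}}(P_F(\cdot\mid s),P_F(\cdot\mid s'))=\min_{\pi\in\Pi}\sum_{i,j}\mathbf{C}_{ij}\pi_{ij}$, where $\Pi=\{\pi\in\mathbb{R}_{+}^{k\times l}:\pi\mathbf{1}_l=P_F(\cdot\mid s),\ \pi^{\top}\mathbf{1}_k=P_F(\cdot\mid s')\}$. The path regularization is $\mathcal{L}_{\mathrm{OT}}(\tau)=\sum_{t=0}^{n-1}\mathrm{OT}_{\mathbf{C}_t}(P_F(\cdot\mid s_t),P_F(\cdot\mid s_{t+1}))$ with $\mathbf{C}_t$ the cost matrix above for the pair $s_t\to s_{t+1}$. The pseudo backward policy at $s$ with children $u_1,\dots,u_k$ is the vector $P_B^{*}(\cdot\mid s)=(P_B^{*}(u_1\mid s),\dots,P_B^{*}(u_k\mid s))$ with $P_B^{*}(u_i\mid s)=P_B(s\mid u_i)$.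 For vectors $p,q$ indexed by $\mathrm{Child}(s)$, $\mathbf{H}(p,q)=-\sum_i p_i\log q_i$ (cross-entropy) and $\mathbf{H}(p)=-\sum_i p_i\log p_i$ (entropy). *)

theory Defs
  imports Complex_Main "HOL-Library.Extended_Nonnegative_Real"
begin

text \<open>Policies: PF v s = P_F(v | s), PB u s' = P_B(u | s').\<close>

definition Child :: "('a \<Rightarrow> 'a \<Rightarrow> bool) \<Rightarrow> 'a \<Rightarrow> 'a set" where
  "Child E s = {v. E s v}"

definition Parent :: "('a \<Rightarrow> 'a \<Rightarrow> bool) \<Rightarrow> 'a \<Rightarrow> 'a set" where
  "Parent E s = {u. E u s}"

definition neglog :: "real \<Rightarrow> ennreal" where
  "neglog p = (if p = 0 then top else ennreal (- ln p))"

definition cost ::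
  "('a \<Rightarrow> 'a \<Rightarrow> bool) \<Rightarrow> ('a \<Rightarrow> 'a \<Rightarrow> real) \<Rightarrow> ('a \<Rightarrow> 'a \<Rightarrow> real)
     \<Rightarrow> 'a \<Rightarrow> 'a \<Rightarrow> 'a \<Rightarrow> 'a \<Rightarrow> ennreal" where
  "cost E PF PB s s' u v =
     (if u = v then 0
      else if E u v then min (neglog (PB s u * PF s' s * PF v s')) (neglog (PF v u))
      else neglog (PB s u * PF s' s * PF v s'))"

definition couplings ::
  "('a \<Rightarrow> 'a \<Rightarrow> bool) \<Rightarrow> ('a \<Rightarrow> 'a \<Rightarrow> real) \<Rightarrow> 'a \<Rightarrow> 'a \<Rightarrow> ('a \<Rightarrow> 'a \<Rightarrow> real) set" where
  "couplings E PF s s' =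
     {\<pi>. (\<forall>u\<in>Child E s. \<forall>v\<in>Child E s'. 0 \<le> \<pi> u v)
        \<and> (\<forall>u\<in>Child E s. (\<Sum>v\<in>Child E s'. \<pi> u v) = PF u s)
        \<and> (\<forall>v\<in>Child E s'. (\<Sum>u\<in>Child E s. \<pi> u v) = PF v s')}"

definition OT ::
  "('a \<Rightarrow> 'a \<Rightarrow> bool) \<Rightarrow> ('a \<Rightarrow> 'a \<Rightarrow> real) \<Rightarrow> ('a \<Rightarrow> 'a \<Rightarrow> real) \<Rightarrow> 'a \<Rightarrow> 'a \<Rightarrow> ennreal" where
  "OT E PF PB s s' =
     (INF \<pi>\<in>couplings E PF s s'.
        \<Sum>u\<in>Child E s. \<Sum>v\<in>Child E s'. ennreal (\<pi> u v) * cost E PF PB s s' u v)"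

definition L_OT ::
  "('a \<Rightarrow> 'a \<Rightarrow> bool) \<Rightarrow> ('a \<Rightarrow> 'a \<Rightarrow> real) \<Rightarrow> ('a \<Rightarrow> 'a \<Rightarrow> real) \<Rightarrow> (nat \<Rightarrow> 'a) \<Rightarrow> nat \<Rightarrow> ennreal" where
  "L_OT E PF PB st n = (\<Sum>t<n. OT E PF PB (st t) (st (Suc t)))"

definition PBstar :: "('a \<Rightarrow> 'a \<Rightarrow> real) \<Rightarrow> 'a \<Rightarrow> 'a \<Rightarrow> real" where
  "PBstar PB u s = PB s u"

definition cross_entropy :: "'a set \<Rightarrow> ('a \<Rightarrow> real) \<Rightarrow> ('a \<Rightarrow> real) \<Rightarrow> ennreal" where
  "cross_entropy I p q = (\<Sum>i\<in>I. ennreal (p i) * neglog (q i))"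

definition entropy :: "'a set \<Rightarrow> ('a \<Rightarrow> real) \<Rightarrow> ennreal" where
  "entropy I p = (\<Sum>i\<in>I. ennreal (p i) * neglog (p i))"

definition L_UB ::
  "('a \<Rightarrow> 'a \<Rightarrow> bool) \<Rightarrow> ('a \<Rightarrow> 'a \<Rightarrow> real) \<Rightarrow> ('a \<Rightarrow> 'a \<Rightarrow> real) \<Rightarrow> (nat \<Rightarrow> 'a) \<Rightarrow> nat \<Rightarrow> ennreal" where
  "L_UB E PF PB st n =
     (\<Sum>t<n. cross_entropy (Child E (st t)) (\<lambda>u. PF u (st t)) (\<lambda>u. PBstar PB u (st t))
            + neglog (PF (st (Suc t)) (st t))
            + entropy (Child E (st (Suc t))) (\<lambda>v. PF v (st (Suc t))))"

end

theory Submission imports Defs begin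

text \<open>Bound each OT term by the cost of the independent coupling
  P_F(.|s) \<otimes> P_F(.|s'). Every off-diagonal cost entry is at most
  -log (P_B(s|u) P_F(s'|s) P_F(v|s')), and -log turns this product into a sum of three terms
  whose expectations under the product coupling are exactly the three summands of L_UB.\<close>

lemma neglog_mult:
  assumes "0 \<le> x" "0 \<le> y"
  shows "neglog (x * y) \<le> neglog x + neglog y"
proof (cases "x = 0 \<or> y = 0")
  case True
  then show ?thesis by (auto simp: neglog_def)
next
  case False
  with assms have "0 < x" "0 < y" by auto
  then have "neglog (x * y) = ennreal (- ln x + - ln y)"
    by (simp add: neglog_def ln_mult)
  also have "\<dots> \<le> ennreal (- ln x) + ennreal (- ln y)"
    by (simp add: ennreal_plus_if ennreal_leI)
  finally show ?thesis using \<open>0 < x\<close> \<open>0 < y\<close> by (simp add: neglog_def)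
qed

lemma neglog_mult3:
  assumes "0 \<le> x" "0 \<le> y" "0 \<le> z"
  shows "neglog (x * y * z) \<le> neglog x + neglog y + neglog z"
  using assms neglog_mult[of "x * y" z] neglog_mult[of x y]
  by (meson add_right_mono order_trans mult_nonneg_nonneg)

lemma cost_le_neglog_path:
  "cost E PF PB s s' u v \<le> neglog (PB s u * PF s' s * PF v s')"
  unfolding cost_def by auto

lemma product_in_couplings:
  assumes "\<forall>u\<in>Child E s. 0 \<le> PF u s" "(\<Sum>u\<in>Child E s. PF u s) = 1"
    and "\<forall>v\<in>Child E s'. 0 \<le> PF v s'" "(\<Sum>v\<in>Child E s'. PF v s') = 1"
  shows "(\<lambda>u v. PF u s * PF v s') \<in> couplings E PF s s'"
  using assms unfolding couplings_def
  by (simp add: sum_distrib_left[symmetric] sum_distrib_right[symmetric])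

lemma sum_product_weights_le_separable:
  fixes a :: "'b \<Rightarrow> ennreal" and d :: "'c \<Rightarrow> ennreal" and c :: "'b \<Rightarrow> 'c \<Rightarrow> ennreal"
  assumes "\<And>u. u \<in> A \<Longrightarrow> 0 \<le> p u" "sum p A = 1"
    and "\<And>v. v \<in> B \<Longrightarrow> 0 \<le> q v" "sum q B = 1"
    and "\<And>u v. u \<in> A \<Longrightarrow> v \<in> B \<Longrightarrow> c u v \<le> a u + b + d v"
  shows "(\<Sum>u\<in>A. \<Sum>v\<in>B. ennreal (p u * q v) * c u v)
     \<le> (\<Sum>u\<in>A. ennreal (p u) * a u) + b + (\<Sum>v\<in>B. ennreal (q v) * d v)"
proof -
  have p_total: "(\<Sum>u\<in>A. ennreal (p u)) = 1" and q_total: "(\<Sum>v\<in>B. ennreal (q v)) = 1"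
    using assms by simp_all
  have "(\<Sum>u\<in>A. \<Sum>v\<in>B. ennreal (p u * q v) * c u v)
     \<le> (\<Sum>u\<in>A. \<Sum>v\<in>B. ennreal (p u) * ennreal (q v) * (a u + b + d v))"
    using assms by (intro sum_mono) (simp add: ennreal_mult mult_left_mono)
  also have "\<dots> = (\<Sum>u\<in>A. \<Sum>v\<in>B. ennreal (p u) * a u * ennreal (q v))
      + (\<Sum>u\<in>A. \<Sum>v\<in>B. ennreal (p u) * ennreal (q v) * b)
      + (\<Sum>u\<in>A. \<Sum>v\<in>B. ennreal (p u) * (ennreal (q v) * d v))"
    by (simp add: sum.distrib distrib_left mult_ac)
  also have "\<dots> = (\<Sum>u\<in>A. ennreal (p u) * a u) + b + (\<Sum>v\<in>B. ennreal (q v) * d v)"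
    by (simp add: sum_distrib_left[symmetric] sum_distrib_right[symmetric] p_total q_total)
  finally show ?thesis .
qed

lemma OT_le_step:
  assumes edge: "E s s'"
    and PF_s: "\<forall>u\<in>Child E s. 0 \<le> PF u s" "(\<Sum>u\<in>Child E s. PF u s) = 1"
    and PF_s': "\<forall>v\<in>Child E s'. 0 \<le> PF v s'" "(\<Sum>v\<in>Child E s'. PF v s') = 1"
    and PB_nonneg: "\<forall>u\<in>Child E s. 0 \<le> PB s u"
  shows "OT E PF PB s s'
    \<le> cross_entropy (Child E s) (\<lambda>u. PF u s) (\<lambda>u. PBstar PB u s)
       + neglog (PF s' s) + entropy (Child E s') (\<lambda>v. PF v s')"
proof -
  have "s' \<in> Child E s" using edge by (simp add: Child_def)
  have "OT E PF PB s s'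
      \<le> (\<Sum>u\<in>Child E s. \<Sum>v\<in>Child E s'. ennreal (PF u s * PF v s') * cost E PF PB s s' u v)"
    unfolding OT_def by (rule INF_lower[OF product_in_couplings[OF PF_s PF_s']])
  also have "\<dots> \<le> (\<Sum>u\<in>Child E s. ennreal (PF u s) * neglog (PB s u)) + neglog (PF s' s)
      + (\<Sum>v\<in>Child E s'. ennreal (PF v s') * neglog (PF v s'))"
  proof (rule sum_product_weights_le_separable)
    fix u v assume "u \<in> Child E s" "v \<in> Child E s'"
    then show "cost E PF PB s s' u v \<le> neglog (PB s u) + neglog (PF s' s) + neglog (PF v s')"
      using cost_le_neglog_path neglog_mult3 PB_nonneg PF_s PF_s' \<open>s' \<in> Child E s\<close>
      by (meson order_trans)
  qed (use PF_s PF_s' in auto)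
  finally show ?thesis by (simp add: cross_entropy_def entropy_def PBstar_def)
qed

theorem theorem1:
  fixes E :: "'a \<Rightarrow> 'a \<Rightarrow> bool"
    and PF PB :: "'a \<Rightarrow> 'a \<Rightarrow> real"
    and st :: "nat \<Rightarrow> 'a" and n :: nat
  assumes acyclic: "\<forall>x. \<not> E\<^sup>+\<^sup>+ x x"
    and fin_child: "\<forall>x. finite (Child E x)"
    and fin_parent: "\<forall>x. finite (Parent E x)"
    and PF_dist: "\<forall>x. Child E x \<noteq> {} \<longrightarrow>
                    (\<forall>v\<in>Child E x. 0 \<le> PF v x) \<and> (\<Sum>v\<in>Child E x. PF v x) = 1"
    and PB_dist: "\<forall>x. Parent E x \<noteq> {} \<longrightarrow>
                    (\<forall>u\<in>Parent E x. 0 \<le> PB u x) \<and> (\<Sum>u\<in>Parent E x. PB u x) = 1"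
    and traj: "\<forall>t<n. E (st t) (st (Suc t))"
    and nonterm: "\<forall>t\<le>n. Child E (st t) \<noteq> {}"
  shows "L_OT E PF PB st n \<le> L_UB E PF PB st n"
  unfolding L_OT_def L_UB_def
proof (rule sum_mono)
  fix t assume "t \<in> {..<n}"
  have PB_nonneg: "\<forall>u\<in>Child E (st t). 0 \<le> PB (st t) u"
  proof
    fix u assume "u \<in> Child E (st t)"
    then have "st t \<in> Parent E u" by (simp add: Child_def Parent_def)
    with PB_dist show "0 \<le> PB (st t) u" by blast
  qed
  from \<open>t \<in> {..<n}\<close> have "E (st t) (st (Suc t))" "Child E (st t) \<noteq> {}" "Child E (st (Suc t)) \<noteq> {}"
    using traj nonterm by auto
  with PF_dist PB_nonneg show "OT E PF PB (st t) (st (Suc t))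
     \<le> cross_entropy (Child E (st t)) (\<lambda>u. PF u (st t)) (\<lambda>u. PBstar PB u (st t))
        + neglog (PF (st (Suc t)) (st t))
        + entropy (Child E (st (Suc t))) (\<lambda>v. PF v (st (Suc t)))"
    by (intro OT_le_step) auto
qed

end
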